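(* Let $N$ be a finite-dimensional Hilbert space, let $S$ be the operator in $\ell_2(\mathbb{Z},N)$ defined below, and let $J$ be a fundamental symmetry in $\ell_2(\mathbb{Z},N)$ commuting with $S$, of the form $(J(x_k))_k=J_-x_k$ for $k\le0$ and $(J(x_k))_k=J_+x_k$ for $k\ge1$ with fundamental symmetries $J_\pm$ in $N$. Then there exist self-adjoint extensions of $S$ commuting with $J$ if and only if $\dim[(I-J_+)N]=\dim[(I-J_-)N]$.
   Context: Let $A$ be the operator in $\ell_2(\mathbb{Z},N)$ with domain consisting of all sequences $f=(f_k)_{k\in\mathbb{Z}}$ of the form $f_k=x_{k-1}-x_k$ with $(x_k)\in\ell_2(\mathbb{Z},N)$, acting by $(Af)_k=i(x_{k-1}+x_k)$; $S$ is the restriction of $A$ to those $f$ with $x_0=0$. A fundamental symmetry is a bounded $J$ with $J=J^*$, $J^2=I$. An operator $B$ commutes with $J$ if $J\mathcal{D}(B)\subset\mathcal{D}(B)$ and $JBu=BJu$ for $u\in\mathcal{D}(B)$. *)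

theory Defs
  imports "HOL-Analysis.Analysis"
begin

text \<open>The finite-dimensional Hilbert space N is modelled as complex^'n ('n a finite type),
  with the standard inner product. Operators (possibly unbounded) are represented by their graphs.\<close>

definition innerN :: "complex^'n \<Rightarrow> complex^'n \<Rightarrow> complex" where
  "innerN x y = (\<Sum>i\<in>UNIV. x$i * cnj (y$i))"

definition l2Z :: "(int \<Rightarrow> complex^'n) set" where
  "l2Z = {x. (\<lambda>k. (norm (x k))^2) summable_on UNIV}"

definition l2_inner :: "(int \<Rightarrow> complex^'n) \<Rightarrow> (int \<Rightarrow> complex^'n) \<Rightarrow> complex" where
  "l2_inner f g = (\<Sum>\<^sub>\<infinity>k. innerN (f k) (g k))"

definition A_graph :: "((int \<Rightarrow> complex^'n) \<times> (int \<Rightarrow> complex^'n)) set" where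
  "A_graph = {((\<lambda>k. x (k - 1) - x k), (\<lambda>k. \<i> *s (x (k - 1) + x k))) | x. x \<in> l2Z}"

definition S_graph :: "((int \<Rightarrow> complex^'n) \<times> (int \<Rightarrow> complex^'n)) set" where
  "S_graph = {((\<lambda>k. x (k - 1) - x k), (\<lambda>k. \<i> *s (x (k - 1) + x k))) | x. x \<in> l2Z \<and> x 0 = 0}"

definition adjoint_graph ::
  "((int \<Rightarrow> complex^'n) \<times> (int \<Rightarrow> complex^'n)) set \<Rightarrow> ((int \<Rightarrow> complex^'n) \<times> (int \<Rightarrow> complex^'n)) set" where
  "adjoint_graph T = {(g, h). g \<in> l2Z \<and> h \<in> l2Z \<and>
      (\<forall>(f, Tf) \<in> T. l2_inner Tf g = l2_inner f h)}"

definition single_valued_graph :: "('a \<times> 'b) set \<Rightarrow> bool" where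
  "single_valued_graph T \<longleftrightarrow> (\<forall>f g g'. (f, g) \<in> T \<longrightarrow> (f, g') \<in> T \<longrightarrow> g = g')"

definition self_adjoint_graph ::
  "((int \<Rightarrow> complex^'n) \<times> (int \<Rightarrow> complex^'n)) set \<Rightarrow> bool" where
  "self_adjoint_graph T \<longleftrightarrow> single_valued_graph T \<and> T = adjoint_graph T"

definition commutes_graph :: "('a \<Rightarrow> 'a) \<Rightarrow> ('a \<times> 'a) set \<Rightarrow> bool" where
  "commutes_graph J B \<longleftrightarrow> (\<forall>(u, v) \<in> B. (J u, J v) \<in> B)"

definition adjoint_mat :: "complex^'n^'n \<Rightarrow> complex^'n^'n" where
  "adjoint_mat M = (\<chi> i j. cnj (M$j$i))"

definition fund_sym_N :: "complex^'n^'n \<Rightarrow> bool" where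
  "fund_sym_N M \<longleftrightarrow> adjoint_mat M = M \<and> M ** M = mat 1"

definition J_op :: "complex^'n^'n \<Rightarrow> complex^'n^'n \<Rightarrow> (int \<Rightarrow> complex^'n) \<Rightarrow> (int \<Rightarrow> complex^'n)" where
  "J_op Jm Jp x = (\<lambda>k. if k \<le> 0 then Jm *v x k else Jp *v x k)"

end

theory Submission
  imports Defs
begin

text \<open>A self-adjoint extension \<open>T\<close> of \<open>S\<close> is governed by the junction between \<open>k = 0\<close> and
  \<open>k = 1\<close>. Testing against \<open>S\<close> shows that every \<open>(g, h) \<in> T\<close> differs from an element of \<open>S\<close> by a
  pair supported on \<open>{0, 1}\<close>, described by two vectors \<open>(a, b)\<close> of \<open>N\<close>; symmetry of \<open>T\<close> makes
  the relation \<open>a \<leftrightarrow> b\<close> isometric and maximality makes it everywhere defined, so it is the graph of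
  a unitary of \<open>N\<close>. If \<open>T\<close> commutes with \<open>J\<close>, this unitary intertwines \<open>J\<^sub>+\<close> and \<open>J\<^sub>-\<close>, hence maps
  the \<open>-1\<close>-eigenspace of \<open>J\<^sub>+\<close>, which is \<open>(I - J\<^sub>+) N\<close>, onto that of \<open>J\<^sub>-\<close>.
  Conversely, if the dimensions agree, matching orthonormal eigenbases gives a unitary \<open>U\<close> with
  \<open>U J\<^sub>- = J\<^sub>+ U\<close>, and the inverse Cayley transform of the shift twisted by \<open>U\<close> at the junction
  is a self-adjoint extension of \<open>S\<close> commuting with \<open>J\<close>.\<close>

section \<open>The inner product of \<open>N\<close>\<close>

lemma innerN_add_left: "innerN (x + y) z = innerN x z + innerN y z"
  by (simp add: innerN_def distrib_right sum.distrib)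

lemma innerN_add_right: "innerN x (y + z) = innerN x y + innerN x z"
  by (simp add: innerN_def distrib_left sum.distrib)

lemma innerN_diff_left: "innerN (x - y) z = innerN x z - innerN y z"
  by (simp add: innerN_def left_diff_distrib sum_subtractf)

lemma innerN_diff_right: "innerN x (y - z) = innerN x y - innerN x z"
  by (simp add: innerN_def right_diff_distrib sum_subtractf)

lemma innerN_scale_left: "innerN (c *s x) y = c * innerN x y"
  by (simp add: innerN_def sum_distrib_left mult.assoc)

lemma innerN_scale_right: "innerN x (c *s y) = cnj c * innerN x y"
  by (simp add: innerN_def sum_distrib_left mult_ac)

lemma innerN_zero_left [simp]: "innerN 0 y = 0"
  by (simp add: innerN_def)

lemma innerN_zero_right [simp]: "innerN x 0 = 0"
  by (simp add: innerN_def)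

lemma innerN_minus_left: "innerN (- x) y = - innerN x y"
  by (simp add: innerN_def sum_negf)

lemma innerN_minus_right: "innerN x (- y) = - innerN x y"
  by (simp add: innerN_def sum_negf)

lemma innerN_cnj: "cnj (innerN x y) = innerN y x"
  by (simp add: innerN_def mult.commute)

lemma innerN_sum_left: "innerN (\<Sum>e\<in>E. f e) y = (\<Sum>e\<in>E. innerN (f e) y)"
  by (induction E rule: infinite_finite_induct) (auto simp: innerN_add_left)

lemma innerN_sum_right: "innerN y (\<Sum>e\<in>E. f e) = (\<Sum>e\<in>E. innerN y (f e))"
  by (induction E rule: infinite_finite_induct) (auto simp: innerN_add_right)

lemma norm_vec_square: "(norm (x::complex^'n))^2 = (\<Sum>i\<in>UNIV. (norm (x$i))^2)"
  by (simp add: norm_vec_def L2_set_def sum_nonneg)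

lemma innerN_self: "innerN x x = of_real ((norm x)^2)"
proof -
  have "innerN x x = (\<Sum>i\<in>UNIV. of_real ((norm (x$i))^2))"
    unfolding innerN_def by (intro sum.cong refl) (metis complex_norm_square of_real_power)
  also have "\<dots> = of_real (\<Sum>i\<in>UNIV. (norm (x$i))^2)" by simp
  finally show ?thesis by (simp add: norm_vec_square)
qed

lemma innerN_self_eq_0 [simp]: "innerN x x = 0 \<longleftrightarrow> x = 0"
  by (simp add: innerN_self)

lemma innerN_ext: assumes "\<And>v. innerN v a = innerN v b" shows "a = b"
proof -
  have "innerN (a - b) (a - b) = 0" using assms[of "a - b"] by (simp add: innerN_diff_right)
  thus ?thesis by simp
qed

lemma norm_innerN_le: "norm (innerN x y) \<le> ((norm x)^2 + (norm y)^2) / 2"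
proof -
  have "norm (innerN x y) \<le> (\<Sum>i\<in>UNIV. norm (x$i * cnj (y$i)))"
    unfolding innerN_def by (rule norm_sum)
  also have "\<dots> \<le> (\<Sum>i\<in>UNIV. ((norm (x$i))^2 + (norm (y$i))^2)/2)"
  proof (intro sum_mono)
    fix i
    have "0 \<le> (norm (x$i) - norm (y$i))^2" by simp
    thus "norm (x$i * cnj (y$i)) \<le> ((norm (x$i))^2 + (norm (y$i))^2)/2"
      by (simp add: norm_mult power2_eq_square algebra_simps)
  qed
  also have "\<dots> = ((norm x)^2 + (norm y)^2) / 2"
    unfolding norm_vec_square by (simp add: sum.distrib flip: sum_divide_distrib)
  finally show ?thesis .
qed

lemma innerN_mat_adjoint: "innerN (M *v x) y = innerN x (adjoint_mat M *v y)"
  by (simp add: innerN_def matrix_vector_mult_def adjoint_mat_def sum_distrib_left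
      sum_distrib_right mult_ac) (rule sum.swap)

section \<open>Square-summable sequences\<close>

lemma mem_l2Z: "x \<in> l2Z \<longleftrightarrow> (\<lambda>k. (norm (x k))^2) summable_on UNIV"
  by (simp add: l2Z_def)

lemma l2Z_dominated:
  assumes "x \<in> l2Z" "\<And>k. norm (y k) \<le> c * norm (x k)"
  shows "y \<in> l2Z"
proof -
  have "(\<lambda>k. c^2 * (norm (x k))^2) summable_on UNIV"
    using assms(1) by (intro summable_on_cmult_right) (simp add: mem_l2Z)
  moreover have "(norm (y k))^2 \<le> c^2 * (norm (x k))^2" for k
  proof -
    have "norm (y k) \<le> \<bar>c\<bar> * norm (x k)" using assms(2)[of k]
      by (meson abs_ge_self mult_right_mono norm_ge_zero order_trans)
    hence "(norm (y k))^2 \<le> (\<bar>c\<bar> * norm (x k))^2" by (intro power_mono) auto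
    thus ?thesis by (simp add: power_mult_distrib)
  qed
  ultimately show ?thesis unfolding mem_l2Z
    by (rule summable_on_comparison_test) auto
qed

lemma l2Z_add:
  assumes "x \<in> l2Z" "y \<in> l2Z"
  shows "(\<lambda>k. x k + y k) \<in> l2Z"
proof -
  have "(\<lambda>k. 2 * (norm (x k))^2 + 2 * (norm (y k))^2) summable_on UNIV"
    using assms by (intro summable_on_add summable_on_cmult_right) (auto simp: mem_l2Z)
  moreover have "(norm (x k + y k))^2 \<le> 2 * (norm (x k))^2 + 2 * (norm (y k))^2" for k
  proof -
    have "norm (x k + y k) \<le> norm (x k) + norm (y k)" by (rule norm_triangle_ineq)
    hence "(norm (x k + y k))^2 \<le> (norm (x k) + norm (y k))^2" by (intro power_mono) auto
    also have "\<dots> \<le> 2 * (norm (x k))^2 + 2 * (norm (y k))^2"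
      using sum_squares_bound[of "norm (x k)" "norm (y k)"] by (simp add: power2_eq_square algebra_simps)
    finally show ?thesis .
  qed
  ultimately show ?thesis unfolding mem_l2Z
    by (rule summable_on_comparison_test) auto
qed

lemma norm_vector_smult: "norm (c *s (x::complex^'n)) = norm c * norm x"
proof -
  have "(norm (c *s x))^2 = (norm c * norm x)^2"
    by (simp add: norm_vec_square power_mult_distrib norm_mult sum_distrib_left)
  thus ?thesis by (simp add: power2_eq_iff_nonneg)
qed

lemma l2Z_scale: assumes "x \<in> l2Z" shows "(\<lambda>k. c *s x k) \<in> l2Z"
  by (rule l2Z_dominated[OF assms, of _ "norm c"]) (simp add: norm_vector_smult)

lemma l2Z_minus: assumes "x \<in> l2Z" shows "(\<lambda>k. - x k) \<in> l2Z"
  by (rule l2Z_dominated[OF assms, of _ 1]) simp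

lemma l2Z_diff:
  assumes "x \<in> l2Z" "y \<in> l2Z"
  shows "(\<lambda>k. x k - y k) \<in> l2Z"
  using l2Z_add[OF assms(1) l2Z_minus[OF assms(2)]] by simp

lemma l2Z_zero: "(\<lambda>k. 0) \<in> l2Z"
  by (simp add: mem_l2Z)

lemma l2Z_finite_support:
  assumes "finite F" "\<And>k. k \<notin> F \<Longrightarrow> x k = 0"
  shows "x \<in> l2Z"
proof -
  have "(\<lambda>k. (norm (x k))^2) summable_on F" using assms(1) by simp
  thus ?thesis unfolding mem_l2Z
    by (subst summable_on_cong_neutral[where T=F and g="\<lambda>k. (norm (x k))^2"]) (auto simp: assms(2))
qed

lemma l2Z_delta: "(\<lambda>k. if k = m then v else 0) \<in> l2Z"
  by (rule l2Z_finite_support[of "{m}"]) auto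

lemma l2Z_shift: assumes "x \<in> l2Z" shows "(\<lambda>k. x (k + c)) \<in> l2Z"
proof -
  have b: "bij_betw (\<lambda>k. k + c) UNIV UNIV"
    by (rule bij_betwI[where g="\<lambda>k. k - c"]) auto
  show ?thesis using assms unfolding mem_l2Z
    using summable_on_reindex_bij_betw[OF b, of "\<lambda>k. (norm (x k))^2"] by simp
qed

lemma l2Z_update:
  assumes "x \<in> l2Z"
  shows "(\<lambda>k. if k = m then v else x k) \<in> l2Z"
proof -
  have "(\<lambda>k. if k = m then 0 else x k) \<in> l2Z"
    by (rule l2Z_dominated[OF assms, of _ 1]) auto
  from l2Z_add[OF this l2Z_delta[of m v]] show ?thesis
    by (simp add: if_distrib cong: if_cong)
qed

lemma summable_on_innerN_l2Z: assumes "x \<in> l2Z" "y \<in> l2Z"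
  shows "(\<lambda>k. innerN (x k) (y k)) summable_on UNIV"
proof -
  have "(\<lambda>k. ((norm (x k))^2 + (norm (y k))^2) * (1/2)) summable_on UNIV"
    using assms by (intro summable_on_add summable_on_cmult_left) (auto simp: mem_l2Z)
  hence "(\<lambda>k. ((norm (x k))^2 + (norm (y k))^2) / 2) summable_on UNIV" by simp
  hence "(\<lambda>k. norm (innerN (x k) (y k))) summable_on UNIV"
    by (rule summable_on_comparison_test) (use norm_innerN_le in auto)
  thus ?thesis by (simp add: summable_on_iff_abs_summable_on_complex)
qed

lemma l2_inner_add_right: assumes "f \<in> l2Z" "x \<in> l2Z" "y \<in> l2Z"
  shows "l2_inner f (\<lambda>k. x k + y k) = l2_inner f x + l2_inner f y"
  unfolding l2_inner_def innerN_add_right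
  by (rule infsum_add; rule summable_on_innerN_l2Z; fact)

lemma l2_inner_add_left: assumes "f \<in> l2Z" "x \<in> l2Z" "y \<in> l2Z"
  shows "l2_inner (\<lambda>k. x k + y k) f = l2_inner x f + l2_inner y f"
  unfolding l2_inner_def innerN_add_left
  by (rule infsum_add; rule summable_on_innerN_l2Z; fact)

lemma l2_inner_scale_right: "l2_inner f (\<lambda>k. c *s x k) = cnj c * l2_inner f x"
  unfolding l2_inner_def innerN_scale_right
  by (cases "c = 0") (auto intro: infsum_cmult_right')

lemma l2_inner_scale_left: "l2_inner (\<lambda>k. c *s x k) f = c * l2_inner x f"
  unfolding l2_inner_def innerN_scale_left
  by (cases "c = 0") (auto intro: infsum_cmult_right')

lemma l2_inner_diff_right: assumes "f \<in> l2Z" "x \<in> l2Z" "y \<in> l2Z"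
  shows "l2_inner f (\<lambda>k. x k - y k) = l2_inner f x - l2_inner f y"
  unfolding l2_inner_def innerN_diff_right
  using infsum_add[OF summable_on_innerN_l2Z[OF assms(1,2)]
      summable_on_uminus[THEN iffD2, OF summable_on_innerN_l2Z[OF assms(1,3)]]]
  by (simp add: infsum_uminus)

lemma l2_inner_diff_left: assumes "f \<in> l2Z" "x \<in> l2Z" "y \<in> l2Z"
  shows "l2_inner (\<lambda>k. x k - y k) f = l2_inner x f - l2_inner y f"
  unfolding l2_inner_def innerN_diff_left
  using infsum_add[OF summable_on_innerN_l2Z[OF assms(2,1)]
      summable_on_uminus[THEN iffD2, OF summable_on_innerN_l2Z[OF assms(3,1)]]]
  by (simp add: infsum_uminus)

lemma l2_inner_finite_support:
  assumes "finite F" "\<And>k. k \<notin> F \<Longrightarrow> innerN (x k) (y k) = 0"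
  shows "l2_inner x y = (\<Sum>k\<in>F. innerN (x k) (y k))"
proof -
  have "l2_inner x y = infsum (\<lambda>k. innerN (x k) (y k)) F"
    unfolding l2_inner_def by (rule infsum_cong_neutral) (auto simp: assms(2))
  thus ?thesis using assms(1) by simp
qed

lemma l2_inner_shift: "l2_inner (\<lambda>k. x (k - 1)) (\<lambda>k. y (k - 1)) = l2_inner x y"
proof -
  have b: "bij_betw (\<lambda>k. k - 1) UNIV (UNIV::int set)"
    by (rule bij_betwI[where g="\<lambda>k. k + 1"]) auto
  show ?thesis unfolding l2_inner_def
    using infsum_reindex_bij_betw[OF b, of "\<lambda>k. innerN (x k) (y k)"] by simp
qed

lemma l2Z_const_on_infinite_eq_0:
  assumes "x \<in> l2Z" "\<And>j. j \<in> (A::int set) \<Longrightarrow> x j = c" "infinite A"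
  shows "c = 0"
proof (rule ccontr)
  assume "c \<noteq> 0"
  hence t: "(norm c)^2 > 0" by simp
  let ?B = "infsum (\<lambda>k. (norm (x k))^2) UNIV"
  have le: "real (card F) * (norm c)^2 \<le> ?B" if "finite F" "F \<subseteq> A" for F
  proof -
    have "(\<Sum>k\<in>F. (norm (x k))^2) \<le> ?B"
      by (rule finite_sum_le_infsum) (use assms(1) that in \<open>auto simp: mem_l2Z\<close>)
    moreover have "(\<Sum>k\<in>F. (norm (x k))^2) = (\<Sum>k\<in>F. (norm c)^2)"
      by (intro sum.cong) (use that assms(2) in auto)
    ultimately show ?thesis by simp
  qed
  obtain n :: nat where n: "real n > ?B / (norm c)^2" using reals_Archimedean2 by blast
  obtain F where F: "F \<subseteq> A" "finite F" "card F = n"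
    using infinite_arbitrarily_large[OF assms(3)] by blast
  have "real n * (norm c)^2 \<le> ?B" using le[OF F(2,1)] F(3) by simp
  with n t show False by (simp add: field_simps)
qed

section \<open>Orthonormal bases\<close>

definition orthonormal :: "(complex^'n) set \<Rightarrow> bool" where
  "orthonormal E \<longleftrightarrow> (\<forall>e\<in>E. innerN e e = 1) \<and> (\<forall>e\<in>E. \<forall>e'\<in>E. e \<noteq> e' \<longrightarrow> innerN e e' = 0)"

lemma orthonormal_coeff: assumes "finite E" "orthonormal E" "e' \<in> E"
  shows "innerN (\<Sum>e\<in>E. c e *s e) e' = c e'"
proof -
  have "innerN (\<Sum>e\<in>E. c e *s e) e' = (\<Sum>e\<in>E. c e * innerN e e')"
    by (simp add: innerN_sum_left innerN_scale_left)
  also have "\<dots> = (\<Sum>e\<in>E. if e = e' then c e else 0)"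
    using assms(2,3) unfolding orthonormal_def by (intro sum.cong) auto
  also have "\<dots> = c e'" using assms(1,3) by simp
  finally show ?thesis .
qed

lemma orthonormal_expansion:
  assumes "finite E" "orthonormal E" "v \<in> vec.span E"
  shows "v = (\<Sum>e\<in>E. innerN v e *s e)"
proof -
  obtain u where u: "v = (\<Sum>e\<in>E. u e *s e)"
    using assms(3) vec.span_finite[OF assms(1)] by auto
  have "innerN v e = u e" if "e \<in> E" for e using orthonormal_coeff[OF assms(1,2) that] u by simp
  hence "(\<Sum>e\<in>E. innerN v e *s e) = (\<Sum>e\<in>E. u e *s e)" by (intro sum.cong) auto
  thus ?thesis using u by simp
qed

lemma orthonormal_residual_perp: assumes "finite E" "orthonormal E" "e' \<in> E"
  shows "innerN (v - (\<Sum>e\<in>E. innerN v e *s e)) e' = 0"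
  using orthonormal_coeff[OF assms] by (simp add: innerN_diff_left)

lemma orthonormal_residual_perp_span:
  assumes "finite E" "orthonormal E" "d \<in> vec.span E"
  shows "innerN (v - (\<Sum>e\<in>E. innerN v e *s e)) d = 0"
proof -
  have "d = (\<Sum>e\<in>E. innerN d e *s e)" by (rule orthonormal_expansion[OF assms])
  hence "innerN (v - (\<Sum>e\<in>E. innerN v e *s e)) d =
     (\<Sum>e'\<in>E. cnj (innerN d e') * innerN (v - (\<Sum>e\<in>E. innerN v e *s e)) e')"
    by (metis (no_types, lifting) innerN_scale_right innerN_sum_right sum.cong)
  also have "\<dots> = 0" using orthonormal_residual_perp[OF assms(1,2)] by simp
  finally show ?thesis .
qed

lemma orthonormal_independent:
  assumes "finite E" "orthonormal E"
  shows "vec.independent E"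
  unfolding vec.independent_explicit
proof (intro conjI allI impI ballI)
  fix c v assume "(\<Sum>v\<in>E. c v *s v) = 0" "v \<in> E"
  thus "c v = 0" using orthonormal_coeff[OF assms \<open>v \<in> E\<close>, of c] by simp
qed (fact assms)

lemma orthonormal_insert_normalized_residual:
  fixes b :: "complex^'n"
  assumes E: "finite E" "orthonormal E"
  defines "r \<equiv> b - (\<Sum>e\<in>E. innerN b e *s e)"
  defines "e0 \<equiv> complex_of_real (1 / norm r) *s r"
  assumes "r \<noteq> 0"
  shows "orthonormal (insert e0 E)" "vec.span (insert e0 E) = vec.span (insert b E)"
proof -
  have nr: "norm r > 0" using \<open>r \<noteq> 0\<close> by simp
  have e0e0: "innerN e0 e0 = 1"
  proof -
    have "innerN e0 e0 = complex_of_real (1/norm r) * cnj (complex_of_real (1/norm r)) * innerN r r"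
      unfolding e0_def innerN_scale_left innerN_scale_right by simp
    also have "\<dots> = 1" unfolding innerN_self using nr by (simp add: power2_eq_square field_simps)
    finally show ?thesis .
  qed
  have perp: "innerN e0 e = 0" "innerN e e0 = 0" if "e \<in> E" for e
  proof -
    show "innerN e0 e = 0"
      using orthonormal_residual_perp[OF E that, of b]
      unfolding e0_def innerN_scale_left r_def by (simp only: mult_zero_right)
    then show "innerN e e0 = 0" using innerN_cnj[of e0 e] by simp
  qed
  show "orthonormal (insert e0 E)"
    using E(2) e0e0 perp unfolding orthonormal_def by auto
  show "vec.span (insert e0 E) = vec.span (insert b E)"
  proof (rule antisym)
    have "e0 \<in> vec.span (insert b E)"
      unfolding e0_def r_def
      by (intro vec.span_scale vec.span_diff vec.span_sum vec.span_base) auto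
    thus "vec.span (insert e0 E) \<subseteq> vec.span (insert b E)"
      by (intro vec.span_minimal) (auto intro: vec.span_base)
  next
    have "b = complex_of_real (norm r) *s e0 + (\<Sum>e\<in>E. innerN b e *s e)"
      using nr by (simp add: e0_def r_def vector_smult_assoc)
    also have "\<dots> \<in> vec.span (insert e0 E)"
      by (intro vec.span_add vec.span_scale vec.span_sum vec.span_base) auto
    finally show "vec.span (insert b E) \<subseteq> vec.span (insert e0 E)"
      by (intro vec.span_minimal) (auto intro: vec.span_base)
  qed
qed

lemma gram_schmidt: assumes "finite B"
  shows "\<exists>E. finite E \<and> orthonormal E \<and> vec.span E = vec.span B"
  using assms
proof (induction B rule: finite_induct)
  case empty
  show ?case by (rule exI[of _ "{}"]) (simp add: orthonormal_def)
next
  case (insert b B)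
  then obtain E where E: "finite E" "orthonormal E" "vec.span E = vec.span B" by blast
  have sp: "vec.span (insert b E) = vec.span (insert b B)"
    by (simp add: vec.span_insert E(3))
  define r where "r = b - (\<Sum>e\<in>E. innerN b e *s e)"
  show ?case
  proof (cases "r = 0")
    case True
    have "(\<Sum>e\<in>E. innerN b e *s e) \<in> vec.span E"
      by (intro vec.span_sum vec.span_scale vec.span_base)
    hence "b \<in> vec.span E" using True unfolding r_def by simp
    hence "vec.span (insert b E) = vec.span E" by (rule vec.span_redundant)
    thus ?thesis using E sp by auto
  next
    case False
    from orthonormal_insert_normalized_residual[OF E(1,2) False[unfolded r_def]] E(1) sp
    show ?thesis by blast
  qed
qed

lemma subspace_orthonormal_basis: assumes "vec.subspace V"
  obtains E where "finite E" "orthonormal E" "vec.span E = V" "card E = vec.dim V"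
proof -
  obtain B where B: "B \<subseteq> V" "vec.independent B" "V \<subseteq> vec.span B" "card B = vec.dim V"
    by (rule vec.basis_exists)
  have fB: "finite B" using B(2) by (rule vec.finiteI_independent)
  obtain E where E: "finite E" "orthonormal E" "vec.span E = vec.span B"
    using gram_schmidt[OF fB] by blast
  have "vec.span B = V" using vec.span_minimal[OF B(1) assms] B(3) by auto
  hence spE: "vec.span E = V" using E(3) by simp
  have "card E = vec.dim E" using orthonormal_independent[OF E(1,2)] by (simp add: vec.dim_eq_card_independent)
  also have "\<dots> = vec.dim V" by (metis spE vec.dim_span)
  finally show ?thesis using that E spE by blast
qed

lemma subspace_eq_UNIV_if_no_perp:
  assumes "vec.subspace D" "\<And>a. (\<And>d. d \<in> D \<Longrightarrow> innerN a d = 0) \<Longrightarrow> a = 0"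
  shows "D = UNIV"
proof -
  obtain E where E: "finite E" "orthonormal E" "vec.span E = D" by (rule subspace_orthonormal_basis[OF assms(1)])
  have "v \<in> D" for v
  proof -
    have "v - (\<Sum>e\<in>E. innerN v e *s e) = 0"
      using assms(2) orthonormal_residual_perp_span[OF E(1,2)] E(3) by blast
    hence "v = (\<Sum>e\<in>E. innerN v e *s e)" by simp
    also have "\<dots> \<in> vec.span E" by (intro vec.span_sum vec.span_scale vec.span_base)
    finally show ?thesis using E(3) by simp
  qed
  thus ?thesis by auto
qed

section \<open>Fundamental symmetries\<close>

lemma fund_sym_N_involution: assumes "fund_sym_N M" shows "M *v (M *v v) = v"
  using assms by (simp add: fund_sym_N_def matrix_vector_mul_assoc)

lemma fund_sym_N_self_adjoint:
  assumes "fund_sym_N M"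
  shows "innerN (M *v x) y = innerN x (M *v y)"
  using assms by (simp add: fund_sym_N_def innerN_mat_adjoint)

lemma norm_fund_sym_N: assumes "fund_sym_N M" shows "norm (M *v v) = norm v"
proof -
  have "innerN (M *v v) (M *v v) = innerN v v" using fund_sym_N_self_adjoint[OF assms] fund_sym_N_involution[OF assms] by simp
  hence "complex_of_real ((norm (M *v v))^2) = complex_of_real ((norm v)^2)" unfolding innerN_self .
  hence "(norm (M *v v))^2 = (norm v)^2" by (simp only: of_real_eq_iff)
  thus ?thesis by (simp add: power2_eq_iff_nonneg)
qed

lemma range_I_minus_fund_sym_N: assumes "fund_sym_N M"
  shows "range (\<lambda>v. (mat 1 - M) *v v) = {u. M *v u = - u}"
proof (intro set_eqI iffI)
  fix u assume "u \<in> range (\<lambda>v. (mat 1 - M) *v v)"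
  then obtain v where "u = v - M *v v" by (auto simp: matrix_vector_mult_diff_rdistrib)
  thus "u \<in> {u. M *v u = - u}" using fund_sym_N_involution[OF assms] by (simp add: vec.diff)
next
  fix u assume "u \<in> {u. M *v u = - u}"
  hence "(mat 1 - M) *v ((1/2) *s u) = u"
    by (simp add: matrix_vector_mult_diff_rdistrib vector_scalar_commute vec_eq_iff)
  thus "u \<in> range (\<lambda>v. (mat 1 - M) *v v)" by (metis rangeI)
qed

lemma subspace_eigenspace: "vec.subspace {u. M *v u = c *s u}"
  unfolding vec.subspace_def
proof (intro conjI ballI allI)
  show "0 \<in> {u. M *v u = c *s u}" by simp
next
  fix x y assume "x \<in> {u. M *v u = c *s u}" "y \<in> {u. M *v u = c *s u}"
  thus "x + y \<in> {u. M *v u = c *s u}" by (simp add: vec.add vec.scale_right_distrib)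
next
  fix d x assume "x \<in> {u. M *v u = c *s u}"
  thus "d *s x \<in> {u. M *v u = c *s u}" by (simp add: vector_scalar_commute vector_smult_assoc mult.commute)
qed

lemma eigenvectors_orthogonal:
  assumes "fund_sym_N M" "M *v u = u" "M *v w = - w"
  shows "innerN u w = 0"
proof -
  have "innerN u w = innerN (M *v u) w" using assms by simp
  also have "\<dots> = innerN u (M *v w)" by (rule fund_sym_N_self_adjoint[OF assms(1)])
  also have "\<dots> = - innerN u w" using assms by (simp add: innerN_minus_right)
  finally show ?thesis by simp
qed

lemma eigen_decomposition: assumes "fund_sym_N M"
  shows "v = (1/2) *s (v + M *v v) + (1/2) *s (v - M *v v)"
    "M *v ((1/2) *s (v + M *v v)) = (1/2) *s (v + M *v v)"
    "M *v ((1/2) *s (v - M *v v)) = - ((1/2) *s (v - M *v v))"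
proof -
  show "v = (1/2) *s (v + M *v v) + (1/2) *s (v - M *v v)"
    by (simp add: vec_eq_iff field_simps)
  show "M *v ((1/2) *s (v + M *v v)) = (1/2) *s (v + M *v v)"
    by (simp only: vector_scalar_commute vec.add fund_sym_N_involution[OF assms] add.commute)
  have "M *v ((1/2) *s (v - M *v v)) = (1/2) *s (M *v v - v)"
    by (simp only: vector_scalar_commute vec.diff fund_sym_N_involution[OF assms])
  also have "\<dots> = - ((1/2) *s (v - M *v v))" by (simp add: vec_eq_iff field_simps)
  finally show "M *v ((1/2) *s (v - M *v v)) = - ((1/2) *s (v - M *v v))" .
qed

lemma fund_sym_N_eigenbasis:
  assumes M: "fund_sym_N M"
  obtains Ap Am where "finite Ap" "finite Am" "orthonormal (Ap \<union> Am)" "Ap \<inter> Am = {}"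
    "\<And>e. e \<in> Ap \<Longrightarrow> M *v e = e" "\<And>e. e \<in> Am \<Longrightarrow> M *v e = - e"
    "vec.span (Ap \<union> Am) = UNIV" "card Am = vec.dim {u. M *v u = - u}"
proof -
  have s1: "vec.subspace {u. M *v u = (1::complex) *s u}" by (rule subspace_eigenspace)
  have s2: "vec.subspace {u. M *v u = (-1::complex) *s u}" by (rule subspace_eigenspace)
  obtain Ap where Ap: "finite Ap" "orthonormal Ap" "vec.span Ap = {u. M *v u = u}"
    using subspace_orthonormal_basis[OF s1] by auto
  obtain Am where Am: "finite Am" "orthonormal Am" "vec.span Am = {u. M *v u = - u}"
     "card Am = vec.dim {u. M *v u = - u}"
    using subspace_orthonormal_basis[OF s2] by (auto simp: vector_smult_lneg)
  have inP: "M *v e = e" if "e \<in> Ap" for e using Ap(3) vec.span_base[OF that] by auto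
  have inM: "M *v e = - e" if "e \<in> Am" for e using Am(3) vec.span_base[OF that] by auto
  have perp: "innerN e e' = 0" "innerN e' e = 0" if "e \<in> Ap" "e' \<in> Am" for e e'
    using eigenvectors_orthogonal[OF M inP[OF that(1)] inM[OF that(2)]] innerN_cnj[of e e'] by auto
  have on: "orthonormal (Ap \<union> Am)"
    unfolding orthonormal_def
  proof (intro conjI ballI impI)
    fix e assume "e \<in> Ap \<union> Am" thus "innerN e e = 1" using Ap(2) Am(2) unfolding orthonormal_def by auto
  next
    fix e e' assume "e \<in> Ap \<union> Am" "e' \<in> Ap \<union> Am" "e \<noteq> e'"
    thus "innerN e e' = 0" using Ap(2) Am(2) perp unfolding orthonormal_def by auto
  qed
  have disj: "Ap \<inter> Am = {}"
  proof (rule ccontr)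
    assume "Ap \<inter> Am \<noteq> {}" then obtain e where "e \<in> Ap" "e \<in> Am" by auto
    with perp(1)[of e e] Ap(2) show False unfolding orthonormal_def by auto
  qed
  have "v \<in> vec.span (Ap \<union> Am)" for v
  proof -
    have "(1/2) *s (v + M *v v) \<in> vec.span Ap" using Ap(3) eigen_decomposition(2)[OF M] by auto
    hence a: "(1/2) *s (v + M *v v) \<in> vec.span (Ap \<union> Am)" using vec.span_mono[of Ap "Ap \<union> Am"] by blast
    have "(1/2) *s (v - M *v v) \<in> vec.span Am" using Am(3) eigen_decomposition(3)[OF M] by auto
    hence b: "(1/2) *s (v - M *v v) \<in> vec.span (Ap \<union> Am)" using vec.span_mono[of Am "Ap \<union> Am"] by blast
    show ?thesis using vec.span_add[OF a b] eigen_decomposition(1)[OF M, of v] by simp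
  qed
  hence "vec.span (Ap \<union> Am) = UNIV" by auto
  show ?thesis by (rule that[OF Ap(1) Am(1) on disj inP inM \<open>vec.span (Ap \<union> Am) = UNIV\<close> Am(4)])
qed

lemma card_orthonormal_basis:
  fixes E :: "(complex^'n) set"
  assumes "finite E" "orthonormal E" "vec.span E = UNIV"
  shows "card E = vec.dim (UNIV :: (complex^'n) set)"
proof -
  have "card E = vec.dim E" using orthonormal_independent[OF assms(1,2)] by (simp add: vec.dim_eq_card_independent)
  also have "\<dots> = vec.dim (vec.span E)" by simp
  finally show ?thesis using assms(3) by simp
qed

section \<open>Unitaries intertwining two fundamental symmetries\<close>

locale unitary_map =
  fixes U U' :: "complex^'n \<Rightarrow> complex^'n"
  assumes innerN_adjoint: "innerN (U v) w = innerN v (U' w)"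
    and adjoint_inverse: "U' (U v) = v"
    and inverse_adjoint: "U (U' w) = w"
begin

lemma innerN_preserving: "innerN (U a) (U b) = innerN a b"
  using innerN_adjoint[of a "U b"] adjoint_inverse by simp

lemma scale: "U (c *s v) = c *s U v"
proof (rule innerN_ext)
  fix w
  have "innerN (U (c *s v)) w = innerN (c *s U v) w"
    by (simp add: innerN_adjoint innerN_scale_left)
  then show "innerN w (U (c *s v)) = innerN w (c *s U v)"
    by (metis innerN_cnj)
qed

lemma map_zero [simp]: "U 0 = 0"
  using scale[of 0 0] by simp

end

lemma orthonormal_coeff_image:
  assumes "finite A" "orthonormal B" "inj_on \<sigma> A" "\<sigma> ` A \<subseteq> B" "e0 \<in> A"
  shows "innerN (\<Sum>e\<in>A. c e *s \<sigma> e) (\<sigma> e0) = c e0"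
proof -
  have "innerN (\<Sum>e\<in>A. c e *s \<sigma> e) (\<sigma> e0) = (\<Sum>e\<in>A. c e * innerN (\<sigma> e) (\<sigma> e0))"
    by (simp add: innerN_sum_left innerN_scale_left)
  also have "\<dots> = (\<Sum>e\<in>A. if e = e0 then c e else 0)"
  proof (rule sum.cong[OF refl])
    fix e assume e: "e \<in> A"
    have "\<sigma> e \<noteq> \<sigma> e0" if "e \<noteq> e0" using assms(3,5) e that by (auto simp: inj_on_def)
    moreover have "\<sigma> e \<in> B" "\<sigma> e0 \<in> B" using assms(4,5) e by auto
    ultimately show "c e * innerN (\<sigma> e) (\<sigma> e0) = (if e = e0 then c e else 0)"
      using assms(2) unfolding orthonormal_def by auto
  qed
  also have "\<dots> = c e0" using assms(1,5) by simp
  finally show ?thesis .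
qed

lemma unitary_map_orthonormal_bases:
  assumes A: "finite A" "orthonormal A" "vec.span A = UNIV"
    and B: "orthonormal B" "vec.span B = UNIV"
    and \<sigma>: "bij_betw \<sigma> A B"
  shows "unitary_map (\<lambda>v. \<Sum>e\<in>A. innerN v e *s \<sigma> e) (\<lambda>p. \<Sum>e\<in>A. innerN p (\<sigma> e) *s e)"
    (is "unitary_map ?U ?U'")
proof -
  have fB: "finite B" using bij_betw_finite[OF \<sigma>] A(1) by simp
  have adjoint: "innerN (?U v) p = innerN v (?U' p)" for v p
  proof -
    have "innerN (?U v) p = (\<Sum>e\<in>A. innerN v e * innerN (\<sigma> e) p)"
      by (simp add: innerN_sum_left innerN_scale_left)
    also have "\<dots> = (\<Sum>e\<in>A. cnj (innerN p (\<sigma> e)) * innerN v e)"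
      by (intro sum.cong refl) (simp add: innerN_cnj mult.commute)
    also have "\<dots> = innerN v (?U' p)"
      by (simp add: innerN_sum_right innerN_scale_right)
    finally show ?thesis .
  qed
  have left_inverse: "?U' (?U v) = v" for v
  proof -
    have "?U' (?U v) = (\<Sum>e\<in>A. innerN v e *s e)"
      by (intro sum.cong refl)
        (use orthonormal_coeff_image[OF A(1) B(1) bij_betw_imp_inj_on[OF \<sigma>]] bij_betwE[OF \<sigma>] in auto)
    also have "\<dots> = v" using orthonormal_expansion[OF A(1,2), of v] A(3) by simp
    finally show ?thesis .
  qed
  have right_inverse: "?U (?U' p) = p" for p
  proof -
    have "?U (?U' p) = (\<Sum>e\<in>A. innerN p (\<sigma> e) *s \<sigma> e)"
      by (intro sum.cong refl) (simp add: orthonormal_coeff[OF A(1,2)])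
    also have "\<dots> = (\<Sum>f\<in>B. innerN p f *s f)"
      by (rule sum.reindex_bij_betw[OF \<sigma>])
    also have "\<dots> = p" using orthonormal_expansion[OF fB B(1), of p] B(2) by simp
    finally show ?thesis .
  qed
  show ?thesis by unfold_locales (fact adjoint left_inverse right_inverse)+
qed

lemma orthonormal_bases_transfer_intertwines:
  assumes "fund_sym_N Jm"
    and eig: "\<And>e. e \<in> A \<Longrightarrow>
      (Jm *v e = e \<and> Jp *v \<sigma> e = \<sigma> e) \<or> (Jm *v e = - e \<and> Jp *v \<sigma> e = - \<sigma> e)"
  shows "(\<Sum>e\<in>A. innerN (Jm *v v) e *s \<sigma> e) = Jp *v (\<Sum>e\<in>A. innerN v e *s \<sigma> e)"
proof -
  have "Jp *v (\<Sum>e\<in>A. innerN v e *s \<sigma> e) = (\<Sum>e\<in>A. innerN v e *s (Jp *v \<sigma> e))"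
    by (simp add: vec.sum vector_scalar_commute)
  also have "\<dots> = (\<Sum>e\<in>A. innerN (Jm *v v) e *s \<sigma> e)"
  proof (rule sum.cong[OF refl])
    fix e assume "e \<in> A"
    have "innerN (Jm *v v) e = innerN v (Jm *v e)" by (rule fund_sym_N_self_adjoint[OF assms(1)])
    with eig[OF \<open>e \<in> A\<close>]
    show "innerN v e *s (Jp *v \<sigma> e) = innerN (Jm *v v) e *s \<sigma> e"
      by (auto simp: innerN_minus_right vector_smult_rneg vector_smult_lneg)
  qed
  finally show ?thesis by (rule sym)
qed

lemma fund_sym_N_unitary_intertwiner:
  fixes Jm Jp :: "complex^'n^'n"
  assumes Jm: "fund_sym_N Jm" and Jp: "fund_sym_N Jp"
    and dims: "vec.dim {u. Jp *v u = - u} = vec.dim {u. Jm *v u = - u}"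
  obtains U U' where "unitary_map U U'" "\<And>v. U (Jm *v v) = Jp *v U v"
proof -
  obtain Pm Mm where m: "finite Pm" "finite Mm" "orthonormal (Pm \<union> Mm)" "Pm \<inter> Mm = {}"
    "\<And>e. e \<in> Pm \<Longrightarrow> Jm *v e = e" "\<And>e. e \<in> Mm \<Longrightarrow> Jm *v e = - e"
    "vec.span (Pm \<union> Mm) = UNIV" "card Mm = vec.dim {u. Jm *v u = - u}"
    using fund_sym_N_eigenbasis[OF Jm] by blast
  obtain Pp Mp where p: "finite Pp" "finite Mp" "orthonormal (Pp \<union> Mp)" "Pp \<inter> Mp = {}"
    "\<And>e. e \<in> Pp \<Longrightarrow> Jp *v e = e" "\<And>e. e \<in> Mp \<Longrightarrow> Jp *v e = - e"
    "vec.span (Pp \<union> Mp) = UNIV" "card Mp = vec.dim {u. Jp *v u = - u}"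
    using fund_sym_N_eigenbasis[OF Jp] by blast
  have card_M: "card Mm = card Mp" using m(8) p(8) dims by simp
  have "card (Pm \<union> Mm) = card (Pp \<union> Mp)"
    using card_orthonormal_basis[of "Pm \<union> Mm"] card_orthonormal_basis[of "Pp \<union> Mp"] m p by simp
  hence card_P: "card Pm = card Pp"
    using card_Un_disjoint[OF m(1,2,4)] card_Un_disjoint[OF p(1,2,4)] card_M by simp
  obtain s1 where s1: "bij_betw s1 Pm Pp" using finite_same_card_bij[OF m(1) p(1) card_P] by blast
  obtain s2 where s2: "bij_betw s2 Mm Mp" using finite_same_card_bij[OF m(2) p(2) card_M] by blast
  define \<sigma> where "\<sigma> e = (if e \<in> Pm then s1 e else s2 e)" for e
  have bP: "bij_betw \<sigma> Pm Pp" using s1 by (rule bij_betw_cong[THEN iffD1, rotated]) (simp add: \<sigma>_def)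
  have bM: "bij_betw \<sigma> Mm Mp" using s2 m(4)
    by (intro bij_betw_cong[THEN iffD1, OF _ s2]) (auto simp: \<sigma>_def)
  have eig: "(Jm *v e = e \<and> Jp *v \<sigma> e = \<sigma> e) \<or> (Jm *v e = - e \<and> Jp *v \<sigma> e = - \<sigma> e)"
    if "e \<in> Pm \<union> Mm" for e
    using that m(5,6) p(5,6) bij_betwE[OF bP] bij_betwE[OF bM] by blast
  show ?thesis
    by (rule that[OF unitary_map_orthonormal_bases[OF _ m(3,7) p(3,7) bij_betw_combine[OF bP bM p(4)]]])
      (use m(1,2) orthonormal_bases_transfer_intertwines[where A="Pm \<union> Mm", OF Jm eig] in auto)
qed

section \<open>Self-adjoint extensions from unitaries\<close>

lemma mem_adjoint_graph:
  "(g, h) \<in> adjoint_graph T \<longleftrightarrow> g \<in> l2Z \<and> h \<in> l2Z \<and> (\<forall>(f, Tf) \<in> T. l2_inner Tf g = l2_inner f h)"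
  by (simp add: adjoint_graph_def)

lemma adjoint_graphD: "(g, h) \<in> adjoint_graph T \<Longrightarrow> (f, Tf) \<in> T \<Longrightarrow> l2_inner Tf g = l2_inner f h"
  by (auto simp: mem_adjoint_graph)

text \<open>Self-adjoint extensions are described through their Cayley transforms: for a unitary
  \<open>U\<close> of \<open>N\<close>, the unitary \<open>W\<close> of \<open>l\<^sub>2(\<int>, N)\<close> shifts a sequence one step to the right, passing the
  value at the junction \<open>0 \<rightarrow> 1\<close> through \<open>U\<close>, and \<open>(f, Tf) = ((W - I) x, i (W + I) x)\<close> is the
  inverse Cayley transform of \<open>W\<close>. On sequences with \<open>x 0 = 0\<close> this is exactly \<open>S\<close>.\<close>

definition twisted_shift ::
  "(complex^'n \<Rightarrow> complex^'n) \<Rightarrow> (int \<Rightarrow> complex^'n) \<Rightarrow> int \<Rightarrow> complex^'n" where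
  "twisted_shift U x k = (if k = 1 then U (x 0) else x (k - 1))"

definition cayley_pair ::
  "(complex^'n \<Rightarrow> complex^'n) \<Rightarrow> (int \<Rightarrow> complex^'n) \<Rightarrow> (int \<Rightarrow> complex^'n) \<times> (int \<Rightarrow> complex^'n)" where
  "cayley_pair U x = ((\<lambda>k. twisted_shift U x k - x k), (\<lambda>k. \<i> *s (twisted_shift U x k + x k)))"

definition extension_graph ::
  "(complex^'n \<Rightarrow> complex^'n) \<Rightarrow> ((int \<Rightarrow> complex^'n) \<times> (int \<Rightarrow> complex^'n)) set" where
  "extension_graph U = {cayley_pair U x | x. x \<in> l2Z}"

lemma cayley_pair_vanishing_at_0:
  assumes "x 0 = 0" "U 0 = 0"
  shows "cayley_pair U x = ((\<lambda>k. x (k - 1) - x k), (\<lambda>k. \<i> *s (x (k - 1) + x k)))"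
proof -
  have "twisted_shift U x k = x (k - 1)" for k using assms by (simp add: twisted_shift_def)
  thus ?thesis by (simp add: cayley_pair_def)
qed

lemma S_graph_eq_cayley_pairs:
  assumes "U 0 = 0"
  shows "S_graph = {cayley_pair U x | x. x \<in> l2Z \<and> x 0 = 0}"
  using cayley_pair_vanishing_at_0[where U=U, OF _ assms] unfolding S_graph_def by force

lemma twisted_shift_delta:
  assumes "U 0 = 0"
  shows "twisted_shift U (\<lambda>k. if k = m then v else 0)
    = (\<lambda>k. if k = m + 1 then (if m = 0 then U v else v) else 0)"
  using assms by (auto simp: twisted_shift_def fun_eq_iff)

lemma l2_inner_cayley_pair_delta:
  assumes "U 0 = 0"
    and "l2_inner (snd (cayley_pair U (\<lambda>k. if k = m then v else 0))) g
       = l2_inner (fst (cayley_pair U (\<lambda>k. if k = m then v else 0))) h"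
  shows "innerN v (h m - \<i> *s g m) = innerN (if m = 0 then U v else v) (h (m + 1) + \<i> *s g (m + 1))"
proof -
  define w where "w = (if m = 0 then U v else v)"
  have ne: "m + 1 \<noteq> m" by simp
  have "l2_inner (snd (cayley_pair U (\<lambda>k. if k = m then v else 0))) g
      = (\<Sum>k\<in>{m, m+1}. innerN (\<i> *s ((if k = m + 1 then w else 0) + (if k = m then v else 0))) (g k))"
    unfolding cayley_pair_def twisted_shift_delta[where U=U, OF assms(1)] w_def snd_conv
    by (rule l2_inner_finite_support) auto
  also have "\<dots> = \<i> * innerN v (g m) + \<i> * innerN w (g (m + 1))"
    using ne by (simp add: innerN_scale_left)
  finally have lhs: "l2_inner (snd (cayley_pair U (\<lambda>k. if k = m then v else 0))) g
      = \<i> * innerN v (g m) + \<i> * innerN w (g (m + 1))" .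
  have "l2_inner (fst (cayley_pair U (\<lambda>k. if k = m then v else 0))) h
      = (\<Sum>k\<in>{m, m+1}. innerN ((if k = m + 1 then w else 0) - (if k = m then v else 0)) (h k))"
    unfolding cayley_pair_def twisted_shift_delta[where U=U, OF assms(1)] w_def fst_conv
    by (rule l2_inner_finite_support) auto
  also have "\<dots> = - innerN v (h m) + innerN w (h (m + 1))"
    using ne by (simp add: innerN_minus_left)
  finally have rhs: "l2_inner (fst (cayley_pair U (\<lambda>k. if k = m then v else 0))) h
      = - innerN v (h m) + innerN w (h (m + 1))" .
  have eq: "\<i> * innerN v (g m) + \<i> * innerN w (g (m + 1)) = - innerN v (h m) + innerN w (h (m + 1))"
    using assms(2) lhs rhs by simp
  have "innerN v (h m - \<i> *s g m) = innerN v (h m) + \<i> * innerN v (g m)"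
    by (simp add: innerN_diff_right innerN_scale_right)
  also have "\<dots> = innerN w (h (m + 1)) - \<i> * innerN w (g (m + 1))"
    using eq by (simp add: algebra_simps)
  also have "\<dots> = innerN w (h (m + 1) + \<i> *s g (m + 1))"
    by (simp add: innerN_add_right innerN_scale_right)
  finally show ?thesis by (simp add: w_def)
qed

text \<open>Injectivity of \<open>x \<mapsto> (W - I) x\<close>: a difference in the kernel is constant on each side of
  the junction, and a constant square-summable sequence on a half-line vanishes.\<close>

lemma cayley_pair_inj:
  assumes "x \<in> l2Z" "x' \<in> l2Z" "fst (cayley_pair U x) = fst (cayley_pair U x')"
  shows "x = x'"
proof -
  define d where "d k = x k - x' k" for k
  have d: "d \<in> l2Z" using l2Z_diff[OF assms(1,2)] by (simp add: d_def[abs_def])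
  have d_step: "d k = d (k + 1)" if "k \<noteq> 0" for k
  proof -
    have "fst (cayley_pair U x) (k + 1) = fst (cayley_pair U x') (k + 1)" using assms(3) by simp
    hence "x k - x (k + 1) = x' k - x' (k + 1)"
      using that by (simp add: cayley_pair_def twisted_shift_def)
    thus ?thesis unfolding d_def by (simp add: algebra_simps)
  qed
  have lo: "d k = d 0" if "k \<le> 0" for k
    using that
  proof (induction k rule: int_le_induct)
    case (step i) then show ?case using d_step[of "i - 1"] by simp
  qed simp
  have hi: "d k = d 1" if "k \<ge> 1" for k
    using that
  proof (induction k rule: int_ge_induct)
    case (step i) then show ?case using d_step[of i] by simp
  qed simp
  have "d 0 = 0"
    by (rule l2Z_const_on_infinite_eq_0[OF d _ infinite_Iic]) (rule lo, simp)
  moreover have "d 1 = 0"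
    by (rule l2Z_const_on_infinite_eq_0[OF d _ infinite_Ici]) (rule hi, simp)
  ultimately have "d k = 0" for k
    using lo[of k] hi[of k] by (cases "k \<le> 0") simp_all
  thus ?thesis by (auto simp: d_def fun_eq_iff)
qed

lemma extension_graph_single_valued: "single_valued_graph (extension_graph U)"
  unfolding single_valued_graph_def extension_graph_def
proof (intro allI impI)
  fix f g g'
  assume "(f, g) \<in> {cayley_pair U x |x. x \<in> l2Z}" "(f, g') \<in> {cayley_pair U x |x. x \<in> l2Z}"
  then obtain x x' where x: "x \<in> l2Z" "(f, g) = cayley_pair U x"
    and x': "x' \<in> l2Z" "(f, g') = cayley_pair U x'"
    by blast
  have "x = x'" by (rule cayley_pair_inj[where U=U, OF x(1) x'(1)]) (metis x(2) x'(2) fst_conv)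
  thus "g = g'" using x x' by (metis snd_conv)
qed

lemma l2_inner_i_sum_diff:
  assumes "a \<in> l2Z" "b \<in> l2Z" "c \<in> l2Z" "d \<in> l2Z"
  shows "l2_inner (\<lambda>k. \<i> *s (a k + b k)) (\<lambda>k. c k - d k)
    = \<i> * (l2_inner a c - l2_inner a d + l2_inner b c - l2_inner b d)"
proof -
  have cd: "(\<lambda>k. c k - d k) \<in> l2Z" by (rule l2Z_diff[OF assms(3,4)])
  have "l2_inner (\<lambda>k. \<i> *s (a k + b k)) (\<lambda>k. c k - d k) = \<i> * l2_inner (\<lambda>k. a k + b k) (\<lambda>k. c k - d k)"
    by (rule l2_inner_scale_left)
  also have "l2_inner (\<lambda>k. a k + b k) (\<lambda>k. c k - d k) = l2_inner a (\<lambda>k. c k - d k) + l2_inner b (\<lambda>k. c k - d k)"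
    by (rule l2_inner_add_left[OF cd assms(1,2)])
  finally show ?thesis
    by (simp add: l2_inner_diff_right[OF assms(1,3,4)] l2_inner_diff_right[OF assms(2,3,4)] algebra_simps)
qed

lemma l2_inner_diff_i_sum:
  assumes "a \<in> l2Z" "b \<in> l2Z" "c \<in> l2Z" "d \<in> l2Z"
  shows "l2_inner (\<lambda>k. a k - b k) (\<lambda>k. \<i> *s (c k + d k))
    = - \<i> * (l2_inner a c + l2_inner a d - l2_inner b c - l2_inner b d)"
proof -
  have cd: "(\<lambda>k. c k + d k) \<in> l2Z" by (rule l2Z_add[OF assms(3,4)])
  have "l2_inner (\<lambda>k. a k - b k) (\<lambda>k. \<i> *s (c k + d k)) = cnj \<i> * l2_inner (\<lambda>k. a k - b k) (\<lambda>k. c k + d k)"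
    by (rule l2_inner_scale_right)
  also have "l2_inner (\<lambda>k. a k - b k) (\<lambda>k. c k + d k) = l2_inner a (\<lambda>k. c k + d k) - l2_inner b (\<lambda>k. c k + d k)"
    by (rule l2_inner_diff_left[OF cd assms(1,2)])
  finally show ?thesis
    by (simp add: l2_inner_add_right[OF assms(1,3,4)] l2_inner_add_right[OF assms(2,3,4)] algebra_simps)
qed

context unitary_map
begin

lemma twisted_shift_l2Z:
  assumes "x \<in> l2Z"
  shows "twisted_shift U x \<in> l2Z"
proof -
  have "(\<lambda>k. if k = 1 then U (x 0) else x (k + -1)) \<in> l2Z"
    by (rule l2Z_update[OF l2Z_shift[OF assms(1)]])
  thus ?thesis unfolding twisted_shift_def[abs_def] diff_conv_add_uminus .
qed

lemma cayley_pair_l2Z: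
  assumes "x \<in> l2Z"
  shows "fst (cayley_pair U x) \<in> l2Z" "snd (cayley_pair U x) \<in> l2Z"
  using l2Z_diff[OF twisted_shift_l2Z[OF assms] assms] l2Z_scale[OF l2Z_add[OF twisted_shift_l2Z[OF assms] assms]]
  by (auto simp: cayley_pair_def)

lemma l2_inner_twisted_shift: "l2_inner (twisted_shift U y) (twisted_shift U x) = l2_inner y x"
proof -
  have "innerN (twisted_shift U y k) (twisted_shift U x k) = innerN (y (k - 1)) (x (k - 1))" for k
    by (simp add: twisted_shift_def innerN_preserving)
  hence "l2_inner (twisted_shift U y) (twisted_shift U x) = l2_inner (\<lambda>k. y (k - 1)) (\<lambda>k. x (k - 1))"
    unfolding l2_inner_def by simp
  thus ?thesis by (simp add: l2_inner_shift)
qed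

lemma S_graph_subset_extension_graph: "S_graph \<subseteq> extension_graph U"
  unfolding S_graph_eq_cayley_pairs[where U=U, OF map_zero] extension_graph_def by blast

lemma extension_graph_subset_adjoint: "extension_graph U \<subseteq> adjoint_graph (extension_graph U)"
proof clarify
  fix g h assume "(g, h) \<in> extension_graph U"
  then obtain x where x: "x \<in> l2Z" "(g, h) = cayley_pair U x" by (auto simp: extension_graph_def)
  have Wx: "twisted_shift U x \<in> l2Z" by (rule twisted_shift_l2Z[OF x(1)])
  have "l2_inner Tf g = l2_inner f h" if fT: "(f, Tf) \<in> extension_graph U" for f Tf
  proof -
    obtain y where y: "y \<in> l2Z" "(f, Tf) = cayley_pair U y"
      using fT by (auto simp: extension_graph_def)
    have Wy: "twisted_shift U y \<in> l2Z" by (rule twisted_shift_l2Z[OF y(1)])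
    have "l2_inner Tf g
        = l2_inner (\<lambda>k. \<i> *s (twisted_shift U y k + y k)) (\<lambda>k. twisted_shift U x k - x k)"
      using x y by (simp add: cayley_pair_def)
    also have "\<dots> = \<i> * (l2_inner (twisted_shift U y) (twisted_shift U x) - l2_inner (twisted_shift U y) x
        + l2_inner y (twisted_shift U x) - l2_inner y x)"
      by (rule l2_inner_i_sum_diff[OF Wy y(1) Wx x(1)])
    also have "\<dots> = - \<i> * (l2_inner (twisted_shift U y) (twisted_shift U x) + l2_inner (twisted_shift U y) x
        - l2_inner y (twisted_shift U x) - l2_inner y x)"
      using l2_inner_twisted_shift[of y x] by (simp add: algebra_simps)
    also have "\<dots> = l2_inner (\<lambda>k. twisted_shift U y k - y k) (\<lambda>k. \<i> *s (twisted_shift U x k + x k))"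
      by (rule l2_inner_diff_i_sum[OF Wy y(1) Wx x(1), symmetric])
    also have "\<dots> = l2_inner f h" using x y by (simp add: cayley_pair_def)
    finally show ?thesis .
  qed
  moreover have "g \<in> l2Z" "h \<in> l2Z"
    using cayley_pair_l2Z[OF x(1)] x(2) by (metis fst_conv snd_conv)+
  ultimately show "(g, h) \<in> adjoint_graph (extension_graph U)"
    unfolding mem_adjoint_graph by blast
qed

lemma adjoint_extension_graph_boundary:
  assumes "(g, h) \<in> adjoint_graph (extension_graph U)"
  shows "m \<noteq> 0 \<Longrightarrow> h m - \<i> *s g m = h (m + 1) + \<i> *s g (m + 1)"
    and "h 0 - \<i> *s g 0 = U' (h 1 + \<i> *s g 1)"
proof -
  have delta: "innerN v (h m - \<i> *s g m) = innerN (if m = 0 then U v else v) (h (m + 1) + \<i> *s g (m + 1))"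
    for m v
  proof (rule l2_inner_cayley_pair_delta[where U=U, OF map_zero])
    have "cayley_pair U (\<lambda>k. if k = m then v else 0) \<in> extension_graph U"
      unfolding extension_graph_def using l2Z_delta by blast
    then show "l2_inner (snd (cayley_pair U (\<lambda>k. if k = m then v else 0))) g
        = l2_inner (fst (cayley_pair U (\<lambda>k. if k = m then v else 0))) h"
      using adjoint_graphD[OF assms] by (metis prod.collapse)
  qed
  show "h m - \<i> *s g m = h (m + 1) + \<i> *s g (m + 1)" if "m \<noteq> 0"
    by (rule innerN_ext) (use delta[of v m for v] that in simp)
  show "h 0 - \<i> *s g 0 = U' (h 1 + \<i> *s g 1)"
    by (rule innerN_ext) (use delta[of v 0 for v] innerN_adjoint in simp)
qed

lemma adjoint_subset_extension_graph: "adjoint_graph (extension_graph U) \<subseteq> extension_graph U"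
proof clarify
  fix g h assume gh: "(g, h) \<in> adjoint_graph (extension_graph U)"
  have l2: "g \<in> l2Z" "h \<in> l2Z" using gh by (auto simp: mem_adjoint_graph)
  define x where "x k = (- \<i> / 2) *s (h k - \<i> *s g k)" for k
  have x: "x \<in> l2Z" unfolding x_def[abs_def] by (intro l2Z_scale l2Z_diff l2)
  have Wx: "twisted_shift U x k = (- \<i> / 2) *s (h k + \<i> *s g k)" for k
  proof (cases "k = 1")
    case True
    have "U (x 0) = (- \<i> / 2) *s (h 1 + \<i> *s g 1)"
      unfolding x_def scale adjoint_extension_graph_boundary(2)[OF gh] inverse_adjoint ..
    with True show ?thesis by (simp add: twisted_shift_def)
  next
    case False
    then show ?thesis
      using adjoint_extension_graph_boundary(1)[OF gh, of "k - 1"]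
      by (simp add: twisted_shift_def x_def)
  qed
  have "(- \<i> / 2) *s (h k + \<i> *s g k) - x k = g k"
    and "\<i> *s ((- \<i> / 2) *s (h k + \<i> *s g k) + x k) = h k" for k
    unfolding x_def by (simp_all add: vec_eq_iff field_simps)
  then have "(g, h) = cayley_pair U x"
    unfolding cayley_pair_def Wx by (rule_tac sym) simp
  then show "(g, h) \<in> extension_graph U"
    using x unfolding extension_graph_def by blast
qed

lemma self_adjoint_extension_graph: "self_adjoint_graph (extension_graph U)"
  unfolding self_adjoint_graph_def
  using extension_graph_single_valued extension_graph_subset_adjoint adjoint_subset_extension_graph
  by blast

lemma extension_graph_commutes:
  assumes "fund_sym_N Jm" "fund_sym_N Jp" and intertwines: "\<And>v. U (Jm *v v) = Jp *v U v"
  shows "commutes_graph (J_op Jm Jp) (extension_graph U)"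
  unfolding commutes_graph_def
proof clarify
  fix f Tf assume "(f, Tf) \<in> extension_graph U"
  then obtain x where x: "x \<in> l2Z" "(f, Tf) = cayley_pair U x" by (auto simp: extension_graph_def)
  have J_op_eq: "J_op Jm Jp z k = (if k \<le> 0 then Jm else Jp) *v z k" for z k
    by (simp add: J_op_def)
  define y where "y = J_op Jm Jp x"
  have y: "y \<in> l2Z"
    by (rule l2Z_dominated[OF x(1), of _ 1])
      (simp add: y_def J_op_def norm_fund_sym_N[OF assms(1)] norm_fund_sym_N[OF assms(2)])
  have Wy: "twisted_shift U y k = (if k \<le> 0 then Jm else Jp) *v twisted_shift U x k" for k
  proof (cases "k = 1")
    case True thus ?thesis by (simp add: twisted_shift_def y_def J_op_def intertwines)
  next
    case False
    hence "(k - 1 \<le> 0) = (k \<le> 0)" by arith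
    thus ?thesis using False by (simp add: twisted_shift_def y_def J_op_eq)
  qed
  have y_eq: "y k = (if k \<le> 0 then Jm else Jp) *v x k" for k by (simp add: y_def J_op_eq)
  have f: "f = (\<lambda>k. twisted_shift U x k - x k)" and Tf: "Tf = (\<lambda>k. \<i> *s (twisted_shift U x k + x k))"
    using x(2) by (simp_all add: cayley_pair_def)
  have "J_op Jm Jp f = (\<lambda>k. twisted_shift U y k - y k)"
    unfolding f by (rule ext) (simp only: J_op_eq vec.diff Wy y_eq)
  moreover have "J_op Jm Jp Tf = (\<lambda>k. \<i> *s (twisted_shift U y k + y k))"
    unfolding Tf by (rule ext) (simp only: J_op_eq vec.add vector_scalar_commute Wy y_eq)
  ultimately have "(J_op Jm Jp f, J_op Jm Jp Tf) = cayley_pair U y"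
    by (simp add: cayley_pair_def)
  then show "(J_op Jm Jp f, J_op Jm Jp Tf) \<in> extension_graph U"
    using y unfolding extension_graph_def by blast
qed

end

section \<open>The unitary of a self-adjoint extension\<close>

lemma isometric_relation_is_graph:
  fixes G :: "((complex^'n) \<times> (complex^'n)) set"
  assumes zero: "(0, 0) \<in> G"
    and add: "\<And>a b a' b'. (a, b) \<in> G \<Longrightarrow> (a', b') \<in> G \<Longrightarrow> (a + a', b + b') \<in> G"
    and scale: "\<And>c a b. (a, b) \<in> G \<Longrightarrow> (c *s a, c *s b) \<in> G"
    and isometric: "\<And>a b a' b'. (a, b) \<in> G \<Longrightarrow> (a', b') \<in> G \<Longrightarrow> innerN a' a = innerN b' b"
    and maximal: "\<And>a. (\<And>a' b'. (a', b') \<in> G \<Longrightarrow> innerN a a' = 0) \<Longrightarrow> a = 0"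
  shows "\<exists>\<phi>. Vector_Spaces.linear (*s) (*s) \<phi> \<and> inj \<phi> \<and> (\<forall>a b. (a, b) \<in> G \<longleftrightarrow> b = \<phi> a)"
proof -
  have diff: "(a - a', b - b') \<in> G" if "(a, b) \<in> G" "(a', b') \<in> G" for a b a' b'
    using add[OF that(1) scale[OF that(2), of "-1"]] by (simp add: vector_smult_lneg)
  have unique: "b = b'" if "(a, b) \<in> G" "(a, b') \<in> G" for a b b'
    using isometric[OF diff[OF that] diff[OF that]] by simp
  have "fst ` G = UNIV"
  proof (rule subspace_eq_UNIV_if_no_perp)
    show "vec.subspace (fst ` G)" unfolding vec.subspace_def
    proof (intro conjI ballI allI)
      show "0 \<in> fst ` G" using zero by force
      show "x + y \<in> fst ` G" if "x \<in> fst ` G" "y \<in> fst ` G" for x y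
        using that add by force
      show "c *s x \<in> fst ` G" if "x \<in> fst ` G" for c x
        using that scale by force
    qed
    show "a = 0" if "\<And>d. d \<in> fst ` G \<Longrightarrow> innerN a d = 0" for a
      by (rule maximal) (use that in force)
  qed
  then have "\<exists>b. (a, b) \<in> G" for a by force
  then obtain \<phi> where \<phi>: "(a, \<phi> a) \<in> G" for a by metis
  have graph: "(a, b) \<in> G \<longleftrightarrow> b = \<phi> a" for a b
    using unique[OF _ \<phi>] \<phi> by blast
  have "Vector_Spaces.linear (*s) (*s) \<phi>"
    unfolding Vector_Spaces.linear_iff
  proof (intro conjI allI)
    show "vector_space ((*s) :: complex \<Rightarrow> complex^'n \<Rightarrow> complex^'n)" by (rule vec.vector_space_axioms)
    then show "vector_space ((*s) :: complex \<Rightarrow> complex^'n \<Rightarrow> complex^'n)" .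
    show "\<phi> (x + y) = \<phi> x + \<phi> y" for x y
      using add[OF \<phi>[of x] \<phi>[of y]] unfolding graph by simp
    show "\<phi> (c *s x) = c *s \<phi> x" for c x
      using scale[OF \<phi>[of x], of c] unfolding graph by simp
  qed
  moreover have "inj \<phi>"
  proof (rule injI)
    fix a a' assume "\<phi> a = \<phi> a'"
    hence "(a - a', 0) \<in> G" using diff[OF \<phi>[of a] \<phi>[of a']] by simp
    from isometric[OF this this] show "a = a'" by simp
  qed
  ultimately show ?thesis using graph by blast
qed

lemma dim_neg_eigenspace_eq_if_intertwined:
  fixes \<phi> :: "complex^'n \<Rightarrow> complex^'n"
  assumes lin: "Vector_Spaces.linear (*s) (*s) \<phi>" and inj: "inj \<phi>"
    and intertwines: "\<And>a. \<phi> (Jp *v a) = Jm *v \<phi> a"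
  shows "vec.dim {u. Jp *v u = - u} = vec.dim {u. Jm *v u = - u}"
proof -
  have surj: "surj \<phi>" by (rule vec.linear_inj_imp_surj[OF lin inj])
  have \<phi>_neg: "\<phi> (- a) = - \<phi> a" for a by (rule vec.linear_neg[OF lin])
  have img: "\<phi> ` {u. Jp *v u = - u} = {u. Jm *v u = - u}"
  proof (intro set_eqI iffI)
    fix w assume "w \<in> \<phi> ` {u. Jp *v u = - u}"
    then obtain u where "Jp *v u = - u" "w = \<phi> u" by auto
    thus "w \<in> {u. Jm *v u = - u}" using intertwines[of u] \<phi>_neg[of u] by simp
  next
    fix w assume w: "w \<in> {u. Jm *v u = - u}"
    obtain u where u: "w = \<phi> u" using surjD[OF surj, of w] by blast
    have "\<phi> (Jp *v u) = \<phi> (- u)" using intertwines[of u] \<phi>_neg[of u] w u by simp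
    hence "Jp *v u = - u" using inj by (simp add: inj_eq)
    thus "w \<in> \<phi> ` {u. Jp *v u = - u}" using u by auto
  qed
  have "vec.dim (\<phi> ` {u. Jp *v u = - u}) = vec.dim {u. Jp *v u = - u}"
    by (rule vec.dim_image_eq[OF lin]) (use inj inj_on_subset in blast)
  thus ?thesis unfolding img by (rule sym)
qed

text \<open>For \<open>T = extension_graph U\<close> one has \<open>cayley_pair U (\<delta>\<^sub>0 b) = boundary_pair (U b) b\<close>, so
  \<open>U\<close> can be recovered from an arbitrary self-adjoint extension as the relation
  \<open>{(a, b). boundary_pair a b \<in> T}\<close>, read backwards.\<close>

definition boundary_pair :: "complex^'n \<Rightarrow> complex^'n \<Rightarrow> (int \<Rightarrow> complex^'n) \<times> (int \<Rightarrow> complex^'n)" where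
  "boundary_pair a b = ((\<lambda>k. (if k = 1 then a else 0) - (if k = 0 then b else 0)),
                        (\<lambda>k. \<i> *s ((if k = 1 then a else 0) + (if k = 0 then b else 0))))"

lemma boundary_pair_l2Z: "fst (boundary_pair a b) \<in> l2Z" "snd (boundary_pair a b) \<in> l2Z"
  by (auto simp: boundary_pair_def split: if_splits intro!: l2Z_finite_support[of "{0,1}"])

lemma l2_inner_fst_boundary_pair:
  "l2_inner f (fst (boundary_pair a b)) = innerN (f 1) a - innerN (f 0) b"
  by (subst l2_inner_finite_support[of "{0,1}"]) (auto simp: boundary_pair_def innerN_minus_right)

lemma l2_inner_snd_boundary_pair:
  "l2_inner f (snd (boundary_pair a b)) = - \<i> * (innerN (f 1) a + innerN (f 0) b)"
  by (subst l2_inner_finite_support[of "{0,1}"]) (auto simp: boundary_pair_def innerN_scale_right algebra_simps)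

lemma boundary_pair_add:
  "boundary_pair (a + a') (b + b')
    = (\<lambda>k. fst (boundary_pair a b) k + fst (boundary_pair a' b') k,
       \<lambda>k. snd (boundary_pair a b) k + snd (boundary_pair a' b') k)"
  by (simp add: boundary_pair_def fun_eq_iff vec.scale_right_distrib)

lemma boundary_pair_scale:
  "boundary_pair (c *s a) (c *s b)
    = (\<lambda>k. c *s fst (boundary_pair a b) k, \<lambda>k. c *s snd (boundary_pair a b) k)"
  by (simp add: boundary_pair_def fun_eq_iff vec.scale_right_diff_distrib vector_smult_assoc mult.commute)

text \<open>Subtracting a suitable element of \<open>S\<close> from \<open>(g, h)\<close> leaves a pair supported at \<open>0\<close> and \<open>1\<close>;
  the hypothesis is what testing \<open>(g, h)\<close> against \<open>S\<close> yields.\<close>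

lemma subtract_S_element_eq_boundary_pair:
  assumes relation: "\<And>m. m \<noteq> 0 \<Longrightarrow> h m - \<i> *s g m = h (m + 1) + \<i> *s g (m + 1)"
    and x_k: "\<And>k. x k = (if k = 0 then 0 else (- \<i> / 2) *s (h k - \<i> *s g k))"
  shows "(\<lambda>k. g k - (x (k - 1) - x k), \<lambda>k. h k - \<i> *s (x (k - 1) + x k))
    = boundary_pair ((- \<i> / 2) *s (h 1 + \<i> *s g 1)) ((- \<i> / 2) *s (h 0 - \<i> *s g 0))"
proof -
  have x_pred: "x (k - 1) = (- \<i> / 2) *s (h k + \<i> *s g k)" if "k \<noteq> 1" for k
    using relation[of "k - 1"] that by (simp add: x_k)
  have "g k - (x (k - 1) - x k)
      = (if k = 1 then (- \<i> / 2) *s (h 1 + \<i> *s g 1) else 0) - (if k = 0 then (- \<i> / 2) *s (h 0 - \<i> *s g 0) else 0)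
    \<and> h k - \<i> *s (x (k - 1) + x k)
      = \<i> *s ((if k = 1 then (- \<i> / 2) *s (h 1 + \<i> *s g 1) else 0) + (if k = 0 then (- \<i> / 2) *s (h 0 - \<i> *s g 0) else 0))"
    for k
  proof -
    consider (zero) "k = 0" | (one) "k = 1" | (other) "k \<noteq> 0" "k \<noteq> 1" by blast
    then show ?thesis
    proof cases
      case zero
      have xs: "x (k - 1) = (- \<i> / 2) *s (h k + \<i> *s g k)" "x k = 0"
        using x_pred[of k] x_k[of k] zero by simp_all
      show ?thesis using zero unfolding xs by (simp add: vec_eq_iff field_simps)
    next
      case one
      have xs: "x (k - 1) = 0" "x k = (- \<i> / 2) *s (h k - \<i> *s g k)"
        using x_k[of k] x_k[of 0] one by simp_all
      show ?thesis using one unfolding xs by (simp add: vec_eq_iff field_simps)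
    next
      case other
      have xs: "x (k - 1) = (- \<i> / 2) *s (h k + \<i> *s g k)" "x k = (- \<i> / 2) *s (h k - \<i> *s g k)"
        using x_pred[of k] x_k[of k] other by simp_all
      show ?thesis using other unfolding xs by (simp add: vec_eq_iff field_simps)
    qed
  qed
  then show ?thesis by (simp add: boundary_pair_def fun_eq_iff)
qed

locale self_adjoint_extension =
  fixes T :: "((int \<Rightarrow> complex^'n) \<times> (int \<Rightarrow> complex^'n)) set"
  assumes S_graph_subset: "S_graph \<subseteq> T"
    and adjoint_eq: "adjoint_graph T = T"
begin

lemma mem_iff: "(g, h) \<in> T \<longleftrightarrow> g \<in> l2Z \<and> h \<in> l2Z \<and> (\<forall>(f, Tf) \<in> T. l2_inner Tf g = l2_inner f h)"
  using mem_adjoint_graph[of g h T] unfolding adjoint_eq .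

lemma l2Z: "(g, h) \<in> T \<Longrightarrow> g \<in> l2Z" "(g, h) \<in> T \<Longrightarrow> h \<in> l2Z"
  by (simp_all add: mem_iff)

lemma symmetric: "(f, Tf) \<in> T \<Longrightarrow> (g, h) \<in> T \<Longrightarrow> l2_inner Tf g = l2_inner f h"
  using adjoint_graphD[of g h T f Tf] unfolding adjoint_eq by simp

lemma add:
  assumes "(g, h) \<in> T" "(g', h') \<in> T"
  shows "(\<lambda>k. g k + g' k, \<lambda>k. h k + h' k) \<in> T"
proof -
  have "l2_inner Tf (\<lambda>k. g k + g' k) = l2_inner f (\<lambda>k. h k + h' k)" if fT: "(f, Tf) \<in> T" for f Tf
    using symmetric[OF fT assms(1)] symmetric[OF fT assms(2)]
    by (simp add: l2_inner_add_right l2Z[OF fT] l2Z[OF assms(1)] l2Z[OF assms(2)])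
  then show ?thesis
    unfolding mem_iff[of "\<lambda>k. g k + g' k"] using l2Z assms by (auto intro: l2Z_add)
qed

lemma scale:
  assumes "(g, h) \<in> T"
  shows "(\<lambda>k. c *s g k, \<lambda>k. c *s h k) \<in> T"
proof -
  have "l2_inner Tf (\<lambda>k. c *s g k) = l2_inner f (\<lambda>k. c *s h k)" if fT: "(f, Tf) \<in> T" for f Tf
    using symmetric[OF fT assms] by (simp add: l2_inner_scale_right)
  then show ?thesis
    unfolding mem_iff[of "\<lambda>k. c *s g k"] using l2Z assms by (auto intro: l2Z_scale)
qed

lemma diff: "(g, h) \<in> T \<Longrightarrow> (g', h') \<in> T \<Longrightarrow> (\<lambda>k. g k - g' k, \<lambda>k. h k - h' k) \<in> T"
  using add[of g h "\<lambda>k. (-1) *s g' k" "\<lambda>k. (-1) *s h' k"] scale[of g' h' "-1"]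
  by (simp add: vector_smult_lneg)

lemma boundary_relation:
  assumes "(g, h) \<in> T" "m \<noteq> 0"
  shows "h m - \<i> *s g m = h (m + 1) + \<i> *s g (m + 1)"
proof (rule innerN_ext)
  fix v :: "complex^'n"
  have "cayley_pair id (\<lambda>k. if k = m then v else 0) \<in> S_graph"
    unfolding S_graph_eq_cayley_pairs[of id, simplified]
    by (intro CollectI exI[of _ "\<lambda>k. if k = m then v else 0"] conjI) (simp_all add: l2Z_delta assms(2))
  then have "cayley_pair id (\<lambda>k. if k = m then v else 0) \<in> T"
    using S_graph_subset by blast
  then have "l2_inner (snd (cayley_pair id (\<lambda>k. if k = m then v else 0))) g
      = l2_inner (fst (cayley_pair id (\<lambda>k. if k = m then v else 0))) h"
    using symmetric[OF _ assms(1)] by (metis prod.collapse)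
  from l2_inner_cayley_pair_delta[of id, OF _ this] assms(2)
  show "innerN v (h m - \<i> *s g m) = innerN v (h (m + 1) + \<i> *s g (m + 1))"
    by simp
qed

lemma boundary_pair_mem:
  assumes "(g, h) \<in> T"
  shows "boundary_pair ((- \<i> / 2) *s (h 1 + \<i> *s g 1)) ((- \<i> / 2) *s (h 0 - \<i> *s g 0)) \<in> T"
proof -
  define x where "x k = (if k = 0 then 0 else (- \<i> / 2) *s (h k - \<i> *s g k))" for k
  have "x \<in> l2Z"
    unfolding x_def[abs_def] by (intro l2Z_update l2Z_scale l2Z_diff l2Z[OF assms])
  moreover have "x 0 = 0" by (simp add: x_def)
  ultimately have "((\<lambda>k. x (k - 1) - x k), (\<lambda>k. \<i> *s (x (k - 1) + x k))) \<in> T"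
    using S_graph_subset unfolding S_graph_def by blast
  note difference = diff[OF assms this]
  have relation: "\<And>m. m \<noteq> 0 \<Longrightarrow> h m - \<i> *s g m = h (m + 1) + \<i> *s g (m + 1)"
    by (rule boundary_relation[OF assms])
  show ?thesis
    using difference subtract_S_element_eq_boundary_pair[of h g x, OF relation x_def] by simp
qed

definition boundary_graph :: "((complex^'n) \<times> (complex^'n)) set" where
  "boundary_graph = {(a, b). boundary_pair a b \<in> T}"

lemma boundary_graph_isometric:
  assumes "(a, b) \<in> boundary_graph" "(a', b') \<in> boundary_graph"
  shows "innerN a' a = innerN b' b"
proof -
  have "l2_inner (snd (boundary_pair a' b')) (fst (boundary_pair a b))
      = l2_inner (fst (boundary_pair a' b')) (snd (boundary_pair a b))"
    using assms symmetric[of "fst (boundary_pair a' b')" "snd (boundary_pair a' b')"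
        "fst (boundary_pair a b)" "snd (boundary_pair a b)"]
    by (simp add: boundary_graph_def)
  then have "2 * \<i> * innerN a' a = 2 * \<i> * innerN b' b"
    unfolding l2_inner_fst_boundary_pair l2_inner_snd_boundary_pair
    by (simp add: boundary_pair_def innerN_scale_left innerN_minus_left algebra_simps)
  then show ?thesis by simp
qed

lemma boundary_graph_maximal:
  assumes perp: "\<And>a' b'. (a', b') \<in> boundary_graph \<Longrightarrow> innerN a a' = 0"
  shows "a = 0"
proof -
  have "boundary_pair a 0 \<in> T"
  proof (subst prod.collapse[symmetric], subst mem_iff, intro conjI boundary_pair_l2Z ballI, clarify)
    fix f Tf assume fT: "(f, Tf) \<in> T"
    have "innerN a ((- \<i> / 2) *s (Tf 1 + \<i> *s f 1)) = 0"
      using perp boundary_pair_mem[OF fT] unfolding boundary_graph_def by blast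
    then have "innerN a (Tf 1 + \<i> *s f 1) = 0"
      by (simp only: innerN_scale_right mult_eq_0_iff) simp
    then have "innerN (Tf 1 + \<i> *s f 1) a = 0"
      using innerN_cnj[of a "Tf 1 + \<i> *s f 1"] by simp
    then have "innerN (Tf 1) a + \<i> * innerN (f 1) a = 0"
      by (simp add: innerN_add_left innerN_scale_left)
    then show "l2_inner Tf (fst (boundary_pair a 0)) = l2_inner f (snd (boundary_pair a 0))"
      unfolding l2_inner_fst_boundary_pair l2_inner_snd_boundary_pair
      by (simp add: algebra_simps eq_neg_iff_add_eq_0)
  qed
  then have "(a, 0) \<in> boundary_graph" by (simp add: boundary_graph_def)
  from boundary_graph_isometric[OF this this] show ?thesis by simp
qed

lemma boundary_graph_is_graph:
  "\<exists>\<phi>. Vector_Spaces.linear (*s) (*s) \<phi> \<and> inj \<phi> \<and> (\<forall>a b. (a, b) \<in> boundary_graph \<longleftrightarrow> b = \<phi> a)"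
proof -
  have "((\<lambda>k. 0 - 0), (\<lambda>k. \<i> *s (0 + 0))) \<in> T"
    using S_graph_subset l2Z_zero unfolding S_graph_def by blast
  then have zero: "(0, 0) \<in> boundary_graph"
    by (simp add: boundary_graph_def boundary_pair_def)
  have add: "(a + a', b + b') \<in> boundary_graph"
    if "(a, b) \<in> boundary_graph" "(a', b') \<in> boundary_graph" for a b a' b'
    using that add[of "fst (boundary_pair a b)" "snd (boundary_pair a b)"
        "fst (boundary_pair a' b')" "snd (boundary_pair a' b')"]
    by (simp add: boundary_graph_def boundary_pair_add)
  have scale: "(c *s a, c *s b) \<in> boundary_graph" if "(a, b) \<in> boundary_graph" for c a b
    using that scale[of "fst (boundary_pair a b)" "snd (boundary_pair a b)" c]
    by (simp add: boundary_graph_def boundary_pair_scale)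
  show ?thesis
    by (rule isometric_relation_is_graph[of boundary_graph])
      (fact zero add scale boundary_graph_isometric boundary_graph_maximal)+
qed

lemma boundary_graph_commutes:
  assumes "commutes_graph (J_op Jm Jp) T" "(a, b) \<in> boundary_graph"
  shows "(Jp *v a, Jm *v b) \<in> boundary_graph"
proof -
  have "(J_op Jm Jp (fst (boundary_pair a b)), J_op Jm Jp (snd (boundary_pair a b))) \<in> T"
    using assms unfolding commutes_graph_def boundary_graph_def by (cases "boundary_pair a b") auto
  moreover have "(J_op Jm Jp (fst (boundary_pair a b)), J_op Jm Jp (snd (boundary_pair a b)))
      = boundary_pair (Jp *v a) (Jm *v b)"
    by (simp add: boundary_pair_def J_op_def fun_eq_iff vec.diff vec.add vec.neg vector_scalar_commute)
  ultimately show ?thesis by (simp add: boundary_graph_def)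
qed

lemma dim_neg_eigenspaces_eq:
  assumes "commutes_graph (J_op Jm Jp) T"
  shows "vec.dim {u. Jp *v u = - u} = vec.dim {u. Jm *v u = - u}"
proof -
  obtain \<phi> where \<phi>: "Vector_Spaces.linear (*s) (*s) \<phi>" "inj \<phi>"
    and graph: "\<And>a b. (a, b) \<in> boundary_graph \<longleftrightarrow> b = \<phi> a"
    using boundary_graph_is_graph by blast
  have "\<phi> (Jp *v a) = Jm *v \<phi> a" for a
    using boundary_graph_commutes[OF assms, of a "\<phi> a"] graph by simp
  then show ?thesis by (rule dim_neg_eigenspace_eq_if_intertwined[OF \<phi>])
qed

end

theorem corollary3p5:
  fixes Jm Jp :: "complex^'n^'n"
  assumes "fund_sym_N Jm" and "fund_sym_N Jp"
    and "commutes_graph (J_op Jm Jp) (S_graph :: ((int \<Rightarrow> complex^'n) \<times> (int \<Rightarrow> complex^'n)) set)"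
  shows "(\<exists>T :: ((int \<Rightarrow> complex^'n) \<times> (int \<Rightarrow> complex^'n)) set.
            S_graph \<subseteq> T \<and> self_adjoint_graph T \<and> commutes_graph (J_op Jm Jp) T)
         \<longleftrightarrow> vec.dim (range (\<lambda>v. (mat 1 - Jp) *v v)) = vec.dim (range (\<lambda>v. (mat 1 - Jm) *v v))"
  unfolding range_I_minus_fund_sym_N[OF assms(1)] range_I_minus_fund_sym_N[OF assms(2)]
proof
  assume "\<exists>T :: ((int \<Rightarrow> complex^'n) \<times> (int \<Rightarrow> complex^'n)) set.
    S_graph \<subseteq> T \<and> self_adjoint_graph T \<and> commutes_graph (J_op Jm Jp) T"
  then obtain T :: "((int \<Rightarrow> complex^'n) \<times> (int \<Rightarrow> complex^'n)) set"
    where "S_graph \<subseteq> T" "self_adjoint_graph T" and commutes: "commutes_graph (J_op Jm Jp) T"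
    by blast
  then interpret self_adjoint_extension T
    by unfold_locales (simp_all add: self_adjoint_graph_def)
  show "vec.dim {u. Jp *v u = - u} = vec.dim {u. Jm *v u = - u}"
    by (rule dim_neg_eigenspaces_eq[OF commutes])
next
  assume "vec.dim {u. Jp *v u = - u} = vec.dim {u. Jm *v u = - u}"
  then obtain U U' where "unitary_map U U'" and intertwines: "\<And>v. U (Jm *v v) = Jp *v U v"
    using fund_sym_N_unitary_intertwiner[OF assms(1,2)] by blast
  interpret unitary_map U U' by fact
  show "\<exists>T. S_graph \<subseteq> T \<and> self_adjoint_graph T \<and> commutes_graph (J_op Jm Jp) T"
    using S_graph_subset_extension_graph self_adjoint_extension_graph
      extension_graph_commutes[OF assms(1,2) intertwines] by blast
qed

end
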